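(* If a monoid $M$ is the limit of an inductive system of strongly sofic monoids, then $M$ is strongly sofic.
   Context: An inductive system of monoids $(M_i,\psi_{ji})$ consists of a directed set $I$, monoids $M_i$ ($i\in I$), and monoid morphisms $\psi_{ji}\colon M_i\to M_j$ for $i\le j$ with $\psi_{ii}=\mathrm{Id}$ and $\psi_{kj}\circ\psi_{ji}=\psi_{ki}$ for $i\le j\le k$. Its limit is $\coprod_i M_i/\sim$, where $x_i\sim x_j$ ($x_i\in M_i$, $x_j\in M_j$) iff $\psi_{\ell i}(x_i)=\psi_{\ell j}(x_j)$ for some $\ell\ge i,j$, with multiplication $[x_i][y_j]=[\psi_{\ell i}(x_i)\psi_{\ell j}(y_j)]$ for $\ell\ge i,j$. Hamming metric on $\operatorname{Map}(D)$ (maps $D\to D$, $D$ finite non-empty): $d_D^{\mathrm{Ham}}(f,g)=\frac{1}{|D|}|\{v:f(v)\ne g(v)\}|$. A monoid $M$ is strongly sofic if for every finite $K\subset M$ there is an integer $\Delta_K\ge1$ such that for every $\varepsilon>0$ there exist a non-empty finite set $D$ and a map $\sigma\colon M\to\operatorname{Map}(D)$ with (1) $\sigma(1_M)=\mathrm{Id}_D$; (2) $d_D^{\mathrm{Ham}}(\sigma(k_1k_2),\sigma(k_1)\sigma(k_2))\le\varepsilon$ for $k_1,k_2\in K$; (3) $d_D^{\mathrm{Ham}}(\sigma(k_1),\sigma(k_2))\ge1-\varepsilon$ for distinct $k_1,k_2\in K$; (4) $|\sigma(k)^{-1}(v)|\le\Delta_K$ for $k\in K$, $v\in D$. *)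

theory Defs
  imports "HOL-Algebra.Group" Complex_Main
begin

text \<open>Hamming distance on maps of a finite set D (maps D to D are represented
  as functions nat to nat that send D into D; D is a finite subset of nat).\<close>
definition ham_dist :: "nat set \<Rightarrow> (nat \<Rightarrow> nat) \<Rightarrow> (nat \<Rightarrow> nat) \<Rightarrow> real" where
  "ham_dist D f g = real (card {v \<in> D. f v \<noteq> g v}) / real (card D)"

definition strongly_sofic :: "('b, 'c) monoid_scheme \<Rightarrow> bool" where
  "strongly_sofic M \<longleftrightarrow>
     (\<forall>K. finite K \<and> K \<subseteq> carrier M \<longrightarrow>
        (\<exists>\<Delta>::nat. \<Delta> \<ge> 1 \<and>
          (\<forall>\<epsilon>::real. \<epsilon> > 0 \<longrightarrow>
            (\<exists>(D::nat set) (\<sigma>::'b \<Rightarrow> nat \<Rightarrow> nat).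
               finite D \<and> D \<noteq> {} \<and>
               (\<forall>m \<in> carrier M. \<sigma> m \<in> D \<rightarrow>\<^sub>E D) \<and>
               \<sigma> \<one>\<^bsub>M\<^esub> = restrict id D \<and>
               (\<forall>k1 \<in> K. \<forall>k2 \<in> K.
                  ham_dist D (\<sigma> (k1 \<otimes>\<^bsub>M\<^esub> k2)) (\<sigma> k1 \<circ> \<sigma> k2) \<le> \<epsilon>) \<and>
               (\<forall>k1 \<in> K. \<forall>k2 \<in> K. k1 \<noteq> k2 \<longrightarrow>
                  ham_dist D (\<sigma> k1) (\<sigma> k2) \<ge> 1 - \<epsilon>) \<and>
               (\<forall>k \<in> K. \<forall>v \<in> D. card {u \<in> D. \<sigma> k u = v} \<le> \<Delta>)))))"

text \<open>Directed set: a preorder on I in which any two elements have an upper bound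
  (I non-empty, so that every finite subset has an upper bound).\<close>
definition directed_set :: "'i set \<Rightarrow> ('i \<Rightarrow> 'i \<Rightarrow> bool) \<Rightarrow> bool" where
  "directed_set I leq \<longleftrightarrow> I \<noteq> {} \<and>
     (\<forall>i \<in> I. leq i i) \<and>
     (\<forall>i \<in> I. \<forall>j \<in> I. \<forall>k \<in> I. leq i j \<longrightarrow> leq j k \<longrightarrow> leq i k) \<and>
     (\<forall>i \<in> I. \<forall>j \<in> I. \<exists>k \<in> I. leq i k \<and> leq j k)"

definition inductive_system ::
  "'i set \<Rightarrow> ('i \<Rightarrow> 'i \<Rightarrow> bool) \<Rightarrow> ('i \<Rightarrow> 'a monoid) \<Rightarrow> ('i \<Rightarrow> 'i \<Rightarrow> 'a \<Rightarrow> 'a) \<Rightarrow> bool" where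
  "inductive_system I leq Ms psi \<longleftrightarrow> directed_set I leq \<and>
     (\<forall>i \<in> I. monoid (Ms i)) \<and>
     (\<forall>i \<in> I. \<forall>j \<in> I. leq i j \<longrightarrow>
         psi j i \<in> hom (Ms i) (Ms j) \<and> psi j i \<one>\<^bsub>Ms i\<^esub> = \<one>\<^bsub>Ms j\<^esub>) \<and>
     (\<forall>i \<in> I. \<forall>x \<in> carrier (Ms i). psi i i x = x) \<and>
     (\<forall>i \<in> I. \<forall>j \<in> I. \<forall>k \<in> I. leq i j \<longrightarrow> leq j k \<longrightarrow>
         (\<forall>x \<in> carrier (Ms i). psi k j (psi j i x) = psi k i x))"

definition dlim_rel ::
  "'i set \<Rightarrow> ('i \<Rightarrow> 'i \<Rightarrow> bool) \<Rightarrow> ('i \<Rightarrow> 'a monoid) \<Rightarrow> ('i \<Rightarrow> 'i \<Rightarrow> 'a \<Rightarrow> 'a) \<Rightarrow> (('i \<times> 'a) \<times> ('i \<times> 'a)) set" where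
  "dlim_rel I leq Ms psi = {((i, x), (j, y)). i \<in> I \<and> j \<in> I \<and> x \<in> carrier (Ms i) \<and> y \<in> carrier (Ms j) \<and>
       (\<exists>l \<in> I. leq i l \<and> leq j l \<and> psi l i x = psi l j y)}"

text \<open>The limit monoid: classes of the disjoint union modulo ~, with
  [x_i][y_j] = [psi l i x_i * psi l j y_j] for l >= i, j, and unit [1_{M_i}].\<close>
definition dlim ::
  "'i set \<Rightarrow> ('i \<Rightarrow> 'i \<Rightarrow> bool) \<Rightarrow> ('i \<Rightarrow> 'a monoid) \<Rightarrow> ('i \<Rightarrow> 'i \<Rightarrow> 'a \<Rightarrow> 'a) \<Rightarrow> ('i \<times> 'a) set monoid" where
  "dlim I leq Ms psi =
     \<lparr> carrier = (SIGMA i:I. carrier (Ms i)) // dlim_rel I leq Ms psi,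
       mult = (\<lambda>A B. SOME C. \<exists>i x j y l. (i, x) \<in> A \<and> (j, y) \<in> B \<and> l \<in> I \<and> leq i l \<and> leq j l \<and>
                 C = dlim_rel I leq Ms psi `` {(l, psi l i x \<otimes>\<^bsub>Ms l\<^esub> psi l j y)}),
       one = dlim_rel I leq Ms psi `` {(SOME i. i \<in> I, \<one>\<^bsub>Ms (SOME i. i \<in> I)\<^esub>)} \<rparr>"

end

theory Submission
  imports Defs
begin

text \<open>Strong soficity only ever looks at finitely many elements. Given a finite set K
  in the limit, the elements of K, their pairwise products and the unit all have
  representatives in a single M_l, and going further up the directed set makes the
  finitely many relations among these representatives hold on the nose in M_l.
  This yields a map from the limit to M_l that is injective on K, multiplicative on
  K \<times> K and unital; composing a sofic approximation of M_l with it gives one for K,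
  with the same bound \<Delta>. Strong soficity is invariant under isomorphism, which
  transfers the result from the limit to M.\<close>

definition sofic_approximation ::
  "('b, 'c) monoid_scheme \<Rightarrow> 'b set \<Rightarrow> nat \<Rightarrow> real \<Rightarrow> nat set \<Rightarrow> ('b \<Rightarrow> nat \<Rightarrow> nat) \<Rightarrow> bool" where
  "sofic_approximation M K \<Delta> \<epsilon> D \<sigma> \<longleftrightarrow>
     finite D \<and> D \<noteq> {} \<and>
     (\<forall>m \<in> carrier M. \<sigma> m \<in> D \<rightarrow>\<^sub>E D) \<and>
     \<sigma> \<one>\<^bsub>M\<^esub> = restrict id D \<and>
     (\<forall>k1 \<in> K. \<forall>k2 \<in> K. ham_dist D (\<sigma> (k1 \<otimes>\<^bsub>M\<^esub> k2)) (\<sigma> k1 \<circ> \<sigma> k2) \<le> \<epsilon>) \<and>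
     (\<forall>k1 \<in> K. \<forall>k2 \<in> K. k1 \<noteq> k2 \<longrightarrow> ham_dist D (\<sigma> k1) (\<sigma> k2) \<ge> 1 - \<epsilon>) \<and>
     (\<forall>k \<in> K. \<forall>v \<in> D. card {u \<in> D. \<sigma> k u = v} \<le> \<Delta>)"

lemma strongly_sofic_iff_sofic_approximation:
  "strongly_sofic M \<longleftrightarrow>
     (\<forall>K. finite K \<and> K \<subseteq> carrier M \<longrightarrow>
        (\<exists>\<Delta>::nat. \<Delta> \<ge> 1 \<and> (\<forall>\<epsilon>::real. \<epsilon> > 0 \<longrightarrow> (\<exists>D \<sigma>. sofic_approximation M K \<Delta> \<epsilon> D \<sigma>))))"
  unfolding strongly_sofic_def sofic_approximation_def ..

lemma sofic_approximation_comp: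
  assumes "sofic_approximation N (f ` K) \<Delta> \<epsilon> D \<sigma>"
    and "f \<in> carrier M \<rightarrow> carrier N" "inj_on f K" "f \<one>\<^bsub>M\<^esub> = \<one>\<^bsub>N\<^esub>"
    and "\<forall>k1 \<in> K. \<forall>k2 \<in> K. f (k1 \<otimes>\<^bsub>M\<^esub> k2) = f k1 \<otimes>\<^bsub>N\<^esub> f k2"
  shows "sofic_approximation M K \<Delta> \<epsilon> D (\<sigma> \<circ> f)"
  using assms unfolding sofic_approximation_def by (simp add: Pi_iff inj_on_eq_iff)

lemma strongly_sofic_if_locally_embeddable:
  fixes M :: "('b, 'c) monoid_scheme"
  assumes "\<And>K. finite K \<Longrightarrow> K \<subseteq> carrier M \<Longrightarrow>
     \<exists>(N :: ('a, 'd) monoid_scheme) f. strongly_sofic N \<and> f \<in> carrier M \<rightarrow> carrier N \<and>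
       inj_on f K \<and> f \<one>\<^bsub>M\<^esub> = \<one>\<^bsub>N\<^esub> \<and> (\<forall>k1 \<in> K. \<forall>k2 \<in> K. f (k1 \<otimes>\<^bsub>M\<^esub> k2) = f k1 \<otimes>\<^bsub>N\<^esub> f k2)"
  shows "strongly_sofic M"
  unfolding strongly_sofic_iff_sofic_approximation
proof (intro allI impI)
  fix K assume K: "finite K \<and> K \<subseteq> carrier M"
  then obtain N :: "('a, 'd) monoid_scheme" and f where N: "strongly_sofic N"
    and f: "f \<in> carrier M \<rightarrow> carrier N" "inj_on f K" "f \<one>\<^bsub>M\<^esub> = \<one>\<^bsub>N\<^esub>"
    and f_mult: "\<forall>k1 \<in> K. \<forall>k2 \<in> K. f (k1 \<otimes>\<^bsub>M\<^esub> k2) = f k1 \<otimes>\<^bsub>N\<^esub> f k2"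
    using assms[of K] by (elim exE conjE) auto
  have "finite (f ` K) \<and> f ` K \<subseteq> carrier N" using K f(1) by auto
  with N obtain \<Delta> :: nat where "\<Delta> \<ge> 1"
    and approx: "\<And>\<epsilon>::real. \<epsilon> > 0 \<Longrightarrow> \<exists>D \<sigma>. sofic_approximation N (f ` K) \<Delta> \<epsilon> D \<sigma>"
    unfolding strongly_sofic_iff_sofic_approximation by auto
  moreover have "\<exists>D \<sigma>. sofic_approximation M K \<Delta> \<epsilon> D \<sigma>" if "\<epsilon> > 0" for \<epsilon> :: real
    using approx[OF that] sofic_approximation_comp[OF _ f f_mult] by blast
  ultimately show "\<exists>\<Delta>::nat. \<Delta> \<ge> 1 \<and> (\<forall>\<epsilon>::real. \<epsilon> > 0 \<longrightarrow> (\<exists>D \<sigma>. sofic_approximation M K \<Delta> \<epsilon> D \<sigma>))"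
    by auto
qed

lemma monoid_iso_one:
  assumes h: "h \<in> iso G H" and "monoid G" "monoid H"
  shows "h \<one>\<^bsub>G\<^esub> = \<one>\<^bsub>H\<^esub>"
proof -
  interpret G: monoid G by fact
  interpret H: monoid H by fact
  have hom: "h \<in> hom G H" and "h ` carrier G = carrier H"
    using h unfolding iso_def bij_betw_def by auto
  then obtain g where g: "g \<in> carrier G" "h g = \<one>\<^bsub>H\<^esub>" by (metis H.one_closed imageE)
  have "h \<one>\<^bsub>G\<^esub> = h \<one>\<^bsub>G\<^esub> \<otimes>\<^bsub>H\<^esub> h g"
    using g(2) hom_in_carrier[OF hom G.one_closed] by simp
  also have "\<dots> = h g" using hom_mult[OF hom G.one_closed g(1)] G.l_one[OF g(1)] by simp
  finally show ?thesis using g(2) by simp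
qed

lemma strongly_sofic_iso:
  fixes M :: "('b, 'd) monoid_scheme" and N :: "('a, 'c) monoid_scheme"
  assumes "strongly_sofic N" and h: "h \<in> iso M N" and "monoid M" "monoid N"
  shows "strongly_sofic M"
proof (rule strongly_sofic_if_locally_embeddable)
  fix K assume "K \<subseteq> carrier M"
  have hom: "h \<in> hom M N" and "inj_on h (carrier M)"
    using h unfolding iso_def bij_betw_def by auto
  then have "h \<in> carrier M \<rightarrow> carrier N" "inj_on h K"
    and "\<forall>k1 \<in> K. \<forall>k2 \<in> K. h (k1 \<otimes>\<^bsub>M\<^esub> k2) = h k1 \<otimes>\<^bsub>N\<^esub> h k2"
    using \<open>K \<subseteq> carrier M\<close> hom_mult[OF hom] by (auto simp: hom_def inj_on_subset subset_iff)
  moreover have "h \<one>\<^bsub>M\<^esub> = \<one>\<^bsub>N\<^esub>" using monoid_iso_one[OF h \<open>monoid M\<close> \<open>monoid N\<close>] .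
  ultimately show "\<exists>(N' :: ('a, 'c) monoid_scheme) f. strongly_sofic N' \<and> f \<in> carrier M \<rightarrow> carrier N' \<and> inj_on f K \<and>
      f \<one>\<^bsub>M\<^esub> = \<one>\<^bsub>N'\<^esub> \<and> (\<forall>k1 \<in> K. \<forall>k2 \<in> K. f (k1 \<otimes>\<^bsub>M\<^esub> k2) = f k1 \<otimes>\<^bsub>N'\<^esub> f k2)"
    using \<open>strongly_sofic N\<close> by blast
qed

lemma directed_set_eventually_all:
  assumes dir: "directed_set I leq" and "finite P" and "i \<in> I"
    and ex: "\<forall>p \<in> P. \<exists>m \<in> I. Q p m"
    and up: "\<forall>p \<in> P. \<forall>m \<in> I. \<forall>n \<in> I. Q p m \<longrightarrow> leq m n \<longrightarrow> Q p n"
  shows "\<exists>l \<in> I. leq i l \<and> (\<forall>p \<in> P. Q p l)"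
  using \<open>finite P\<close> ex up
proof (induction P rule: finite_induct)
  case empty
  then show ?case using dir \<open>i \<in> I\<close> unfolding directed_set_def by blast
next
  case (insert p P)
  then obtain l where l: "l \<in> I" "leq i l" "\<forall>q \<in> P. Q q l" by blast
  obtain m where m: "m \<in> I" "Q p m" using insert.prems(1) by blast
  obtain n where n: "n \<in> I" "leq l n" "leq m n"
    using dir l(1) m(1) unfolding directed_set_def by blast
  have "leq i n" using dir \<open>i \<in> I\<close> l n unfolding directed_set_def by blast
  moreover have "\<forall>q \<in> insert p P. Q q n" using insert.prems(2) l m n by blast
  ultimately show ?case using n(1) by blast
qed

locale monoid_inductive_system =
  fixes I :: "'i set" and leq :: "'i \<Rightarrow> 'i \<Rightarrow> bool"
    and Ms :: "'i \<Rightarrow> 'a monoid" and psi :: "'i \<Rightarrow> 'i \<Rightarrow> 'a \<Rightarrow> 'a"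
  assumes system: "inductive_system I leq Ms psi"
begin

abbreviation lim_rel where "lim_rel \<equiv> dlim_rel I leq Ms psi"
abbreviation Lim where "Lim \<equiv> dlim I leq Ms psi"

lemma directed: "directed_set I leq"
  and monoid: "i \<in> I \<Longrightarrow> monoid (Ms i)"
  and psi_hom: "i \<in> I \<Longrightarrow> j \<in> I \<Longrightarrow> leq i j \<Longrightarrow> psi j i \<in> hom (Ms i) (Ms j)"
  and psi_one: "i \<in> I \<Longrightarrow> j \<in> I \<Longrightarrow> leq i j \<Longrightarrow> psi j i \<one>\<^bsub>Ms i\<^esub> = \<one>\<^bsub>Ms j\<^esub>"
  and psi_id: "i \<in> I \<Longrightarrow> x \<in> carrier (Ms i) \<Longrightarrow> psi i i x = x"
  and psi_comp: "i \<in> I \<Longrightarrow> j \<in> I \<Longrightarrow> k \<in> I \<Longrightarrow> leq i j \<Longrightarrow> leq j k \<Longrightarrow> x \<in> carrier (Ms i) \<Longrightarrow>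
         psi k j (psi j i x) = psi k i x"
  using system unfolding inductive_system_def by blast+

lemma leq_refl: "i \<in> I \<Longrightarrow> leq i i"
  and leq_trans: "i \<in> I \<Longrightarrow> j \<in> I \<Longrightarrow> k \<in> I \<Longrightarrow> leq i j \<Longrightarrow> leq j k \<Longrightarrow> leq i k"
  and upper_bound: "i \<in> I \<Longrightarrow> j \<in> I \<Longrightarrow> \<exists>k \<in> I. leq i k \<and> leq j k"
  using directed unfolding directed_set_def by blast+

lemma psi_closed: "i \<in> I \<Longrightarrow> j \<in> I \<Longrightarrow> leq i j \<Longrightarrow> x \<in> carrier (Ms i) \<Longrightarrow> psi j i x \<in> carrier (Ms j)"
  by (rule hom_in_carrier[OF psi_hom])

lemma psi_mult: "i \<in> I \<Longrightarrow> j \<in> I \<Longrightarrow> leq i j \<Longrightarrow> x \<in> carrier (Ms i) \<Longrightarrow> y \<in> carrier (Ms i) \<Longrightarrow>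
    psi j i (x \<otimes>\<^bsub>Ms i\<^esub> y) = psi j i x \<otimes>\<^bsub>Ms j\<^esub> psi j i y"
  by (rule hom_mult[OF psi_hom])

lemma lim_rel_iff [simp]:
  "((i, x), (j, y)) \<in> lim_rel \<longleftrightarrow> i \<in> I \<and> j \<in> I \<and> x \<in> carrier (Ms i) \<and> y \<in> carrier (Ms j) \<and>
     (\<exists>l \<in> I. leq i l \<and> leq j l \<and> psi l i x = psi l j y)"
  unfolding dlim_rel_def by auto

lemma psi_eq_upward:
  assumes "i \<in> I" "j \<in> I" "m \<in> I" "n \<in> I" "leq i m" "leq j m" "leq m n"
    and "x \<in> carrier (Ms i)" "y \<in> carrier (Ms j)" "psi m i x = psi m j y"
  shows "psi n i x = psi n j y"
proof -
  have "psi n i x = psi n m (psi m i x)" using psi_comp[of i m n x] assms(1,3-5,7,8) by simp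
  also have "\<dots> = psi n m (psi m j y)" using assms(10) by simp
  also have "\<dots> = psi n j y" using psi_comp[of j m n y] assms(2-4,6,7,9) by simp
  finally show ?thesis .
qed

lemma lim_rel_above:
  assumes "((i, x), (j, y)) \<in> lim_rel" and "k \<in> I"
  shows "\<exists>n \<in> I. leq k n \<and> leq i n \<and> leq j n \<and> psi n i x = psi n j y"
proof -
  obtain m where m: "m \<in> I" "leq i m" "leq j m" "psi m i x = psi m j y"
    and ij: "i \<in> I" "j \<in> I" "x \<in> carrier (Ms i)" "y \<in> carrier (Ms j)"
    using assms(1) by auto
  obtain n where n: "n \<in> I" "leq m n" "leq k n" using upper_bound[OF m(1) \<open>k \<in> I\<close>] by blast
  show ?thesis
    using n m ij leq_trans[of i m n] leq_trans[of j m n] psi_eq_upward[of i j m n x y] by blast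
qed

lemma equiv_lim_rel: "equiv (SIGMA i:I. carrier (Ms i)) lim_rel"
proof (rule equivI)
  show "lim_rel \<subseteq> (SIGMA i:I. carrier (Ms i)) \<times> (SIGMA i:I. carrier (Ms i))"
    unfolding dlim_rel_def by blast
  show "refl_on (SIGMA i:I. carrier (Ms i)) lim_rel"
    by (rule refl_onI) (auto simp: dlim_rel_def intro: leq_refl)
  show "sym lim_rel" by (rule symI) (auto simp: dlim_rel_def)
  show "trans lim_rel"
  proof (rule transI, clarify)
    fix i x j y k z
    assume ij: "((i, x), (j, y)) \<in> lim_rel" and jk: "((j, y), (k, z)) \<in> lim_rel"
    obtain m where m: "m \<in> I" "leq i m" "leq j m" "psi m i x = psi m j y"
      using ij by auto
    obtain n where n: "n \<in> I" "leq m n" "leq j n" "leq k n" "psi n j y = psi n k z"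
      using lim_rel_above[OF jk m(1)] by blast
    have "psi n i x = psi n j y"
      using ij m n psi_eq_upward[of i j m n x y] by auto
    then show "((i, x), (k, z)) \<in> lim_rel"
      using ij jk m n leq_trans[of i m n] by auto
  qed
qed

lemma carrier_dlim: "carrier Lim = (SIGMA i:I. carrier (Ms i)) // lim_rel"
  unfolding dlim_def by simp

lemma class_in_carrier: "i \<in> I \<Longrightarrow> x \<in> carrier (Ms i) \<Longrightarrow> lim_rel `` {(i, x)} \<in> carrier Lim"
  unfolding carrier_dlim by (simp add: quotientI)

lemma class_eq_iff:
  "i \<in> I \<Longrightarrow> x \<in> carrier (Ms i) \<Longrightarrow> j \<in> I \<Longrightarrow> y \<in> carrier (Ms j) \<Longrightarrow>
    lim_rel `` {(i, x)} = lim_rel `` {(j, y)} \<longleftrightarrow> ((i, x), (j, y)) \<in> lim_rel"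
  using eq_equiv_class_iff[OF equiv_lim_rel] by simp

lemma carrier_dlimE:
  assumes "A \<in> carrier Lim"
  obtains i x where "i \<in> I" "x \<in> carrier (Ms i)" "A = lim_rel `` {(i, x)}"
  using assms unfolding carrier_dlim by (auto elim!: quotientE)

lemma class_lift:
  assumes "i \<in> I" "l \<in> I" "leq i l" "x \<in> carrier (Ms i)"
  shows "lim_rel `` {(i, x)} = lim_rel `` {(l, psi l i x)}"
  using assms psi_closed[OF assms(1-4)] psi_id[of l "psi l i x"]
  by (subst class_eq_iff) (auto intro: leq_refl)

lemma dlim_mult_well_defined:
  assumes l: "l \<in> I" and u: "u \<in> carrier (Ms l)" and v: "v \<in> carrier (Ms l)"
    and ix: "((l, u), (i, x)) \<in> lim_rel" and jy: "((l, v), (j, y)) \<in> lim_rel"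
    and k: "k \<in> I" "leq i k" "leq j k"
  shows "lim_rel `` {(k, psi k i x \<otimes>\<^bsub>Ms k\<^esub> psi k j y)} = lim_rel `` {(l, u \<otimes>\<^bsub>Ms l\<^esub> v)}"
proof -
  obtain n1 where n1: "n1 \<in> I" "leq k n1" "leq l n1" "leq i n1" "psi n1 l u = psi n1 i x"
    using lim_rel_above[OF ix k(1)] by blast
  obtain n where n: "n \<in> I" "leq n1 n" "leq l n" "leq j n" "psi n l v = psi n j y"
    using lim_rel_above[OF jy n1(1)] by blast
  have i: "i \<in> I" "x \<in> carrier (Ms i)" and j: "j \<in> I" "y \<in> carrier (Ms j)"
    using ix jy by auto
  have kn: "leq k n" using leq_trans[OF k(1) n1(1) n(1)] n1 n by blast
  have "psi n l u = psi n i x"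
    using psi_eq_upward[of l i n1 n u x] n1 n i l u by blast
  have cx: "psi k i x \<in> carrier (Ms k)" and cy: "psi k j y \<in> carrier (Ms k)"
    using psi_closed[OF i(1) k(1) k(2) i(2)] psi_closed[OF j(1) k(1) k(3) j(2)] .
  have "psi n k (psi k i x \<otimes>\<^bsub>Ms k\<^esub> psi k j y) = psi n k (psi k i x) \<otimes>\<^bsub>Ms n\<^esub> psi n k (psi k j y)"
    using psi_mult[OF k(1) n(1) kn cx cy] .
  also have "\<dots> = psi n i x \<otimes>\<^bsub>Ms n\<^esub> psi n j y"
    using psi_comp[OF i(1) k(1) n(1) k(2) kn i(2)] psi_comp[OF j(1) k(1) n(1) k(3) kn j(2)] by simp
  also have "\<dots> = psi n l (u \<otimes>\<^bsub>Ms l\<^esub> v)"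
    using psi_mult[OF l n(1) n(3) u v] \<open>psi n l u = psi n i x\<close> n(5) by simp
  finally have "psi n k (psi k i x \<otimes>\<^bsub>Ms k\<^esub> psi k j y) = psi n l (u \<otimes>\<^bsub>Ms l\<^esub> v)" .
  then have "((k, psi k i x \<otimes>\<^bsub>Ms k\<^esub> psi k j y), (l, u \<otimes>\<^bsub>Ms l\<^esub> v)) \<in> lim_rel"
    using k(1) l n(1,3) kn monoid.m_closed[OF monoid[OF k(1)] cx cy] monoid.m_closed[OF monoid[OF l] u v]
    unfolding lim_rel_iff by blast
  then show ?thesis using equiv_class_eq[OF equiv_lim_rel] by simp
qed

lemma mult_class:
  assumes l: "l \<in> I" and u: "u \<in> carrier (Ms l)" and v: "v \<in> carrier (Ms l)"
  shows "lim_rel `` {(l, u)} \<otimes>\<^bsub>Lim\<^esub> lim_rel `` {(l, v)} = lim_rel `` {(l, u \<otimes>\<^bsub>Ms l\<^esub> v)}"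
proof -
  define P where "P C \<longleftrightarrow> (\<exists>i x j y k. (i, x) \<in> lim_rel `` {(l, u)} \<and> (j, y) \<in> lim_rel `` {(l, v)} \<and>
     k \<in> I \<and> leq i k \<and> leq j k \<and> C = lim_rel `` {(k, psi k i x \<otimes>\<^bsub>Ms k\<^esub> psi k j y)})" for C
  have mult_eq: "lim_rel `` {(l, u)} \<otimes>\<^bsub>Lim\<^esub> lim_rel `` {(l, v)} = (SOME C. P C)"
    unfolding P_def dlim_def by simp
  have "P (lim_rel `` {(l, u \<otimes>\<^bsub>Ms l\<^esub> v)})"
    unfolding P_def using l u v psi_id leq_refl
    by (intro exI[of _ l] exI[of _ u] exI[of _ v]) auto
  moreover have "C = lim_rel `` {(l, u \<otimes>\<^bsub>Ms l\<^esub> v)}" if "P C" for C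
    using that dlim_mult_well_defined[OF l u v] unfolding P_def by blast
  ultimately show ?thesis
    unfolding mult_eq by (rule some_equality)
qed

lemma one_dlim: "l \<in> I \<Longrightarrow> \<one>\<^bsub>Lim\<^esub> = lim_rel `` {(l, \<one>\<^bsub>Ms l\<^esub>)}"
proof -
  assume l: "l \<in> I"
  define i where "i = (SOME i. i \<in> I)"
  have i: "i \<in> I" unfolding i_def using l by (rule someI)
  obtain n where n: "n \<in> I" "leq i n" "leq l n" using upper_bound[OF i l] by blast
  have "((i, \<one>\<^bsub>Ms i\<^esub>), (l, \<one>\<^bsub>Ms l\<^esub>)) \<in> lim_rel"
    using i l n psi_one monoid.one_closed[OF monoid] by auto
  then show ?thesis
    unfolding dlim_def i_def[symmetric] using class_eq_iff i l monoid.one_closed[OF monoid] by simp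
qed

lemma dlim_common_level:
  assumes "finite T" "T \<subseteq> carrier Lim"
  shows "\<exists>l \<in> I. \<exists>u. \<forall>A \<in> T. u A \<in> carrier (Ms l) \<and> lim_rel `` {(l, u A)} = A"
proof -
  define at_level where "at_level A m \<longleftrightarrow> (\<exists>u. u \<in> carrier (Ms m) \<and> lim_rel `` {(m, u)} = A)" for A m
  obtain i where i: "i \<in> I" using directed unfolding directed_set_def by blast
  have "\<forall>A \<in> T. \<exists>m \<in> I. at_level A m"
  proof
    fix A assume "A \<in> T"
    with assms(2) obtain m x where "m \<in> I" "x \<in> carrier (Ms m)" "A = lim_rel `` {(m, x)}"
      by (blast elim: carrier_dlimE)
    then show "\<exists>m \<in> I. at_level A m" unfolding at_level_def by blast
  qed
  moreover have "\<forall>A \<in> T. \<forall>m \<in> I. \<forall>n \<in> I. at_level A m \<longrightarrow> leq m n \<longrightarrow> at_level A n"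
    unfolding at_level_def by (metis class_lift psi_closed)
  ultimately obtain l where "l \<in> I" "\<forall>A \<in> T. at_level A l"
    using directed_set_eventually_all[OF directed assms(1) i] by blast
  then show ?thesis unfolding at_level_def by metis
qed

lemma monoid_dlim: "monoid Lim"
proof (rule monoidI)
  fix A B assume "A \<in> carrier Lim" "B \<in> carrier Lim"
  then obtain l a b where "l \<in> I" "a \<in> carrier (Ms l)" "b \<in> carrier (Ms l)"
    "A = lim_rel `` {(l, a)}" "B = lim_rel `` {(l, b)}"
    using dlim_common_level[of "{A, B}"] by auto
  then show "A \<otimes>\<^bsub>Lim\<^esub> B \<in> carrier Lim"
    by (simp add: mult_class class_in_carrier monoid.m_closed[OF monoid])
next
  obtain l where "l \<in> I" using directed unfolding directed_set_def by blast
  then show "\<one>\<^bsub>Lim\<^esub> \<in> carrier Lim"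
    by (simp add: one_dlim class_in_carrier monoid.one_closed[OF monoid])
next
  fix A B C assume "A \<in> carrier Lim" "B \<in> carrier Lim" "C \<in> carrier Lim"
  then obtain l a b c where "l \<in> I" "a \<in> carrier (Ms l)" "b \<in> carrier (Ms l)" "c \<in> carrier (Ms l)"
    "A = lim_rel `` {(l, a)}" "B = lim_rel `` {(l, b)}" "C = lim_rel `` {(l, c)}"
    using dlim_common_level[of "{A, B, C}"] by auto
  then show "A \<otimes>\<^bsub>Lim\<^esub> B \<otimes>\<^bsub>Lim\<^esub> C = A \<otimes>\<^bsub>Lim\<^esub> (B \<otimes>\<^bsub>Lim\<^esub> C)"
    by (simp add: mult_class monoid.m_closed[OF monoid] monoid.m_assoc[OF monoid])
next
  fix A assume "A \<in> carrier Lim"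
  then obtain l a where "l \<in> I" "a \<in> carrier (Ms l)" "A = lim_rel `` {(l, a)}"
    by (rule carrier_dlimE)
  then show "\<one>\<^bsub>Lim\<^esub> \<otimes>\<^bsub>Lim\<^esub> A = A" "A \<otimes>\<^bsub>Lim\<^esub> \<one>\<^bsub>Lim\<^esub> = A"
    by (simp_all add: one_dlim mult_class monoid.one_closed[OF monoid] monoid.l_one[OF monoid]
        monoid.r_one[OF monoid])
qed

lemma classes_eq_at_common_level:
  assumes "finite X" "l0 \<in> I"
    and ab: "\<And>x. x \<in> X \<Longrightarrow> a x \<in> carrier (Ms l0) \<and> b x \<in> carrier (Ms l0) \<and>
      lim_rel `` {(l0, a x)} = lim_rel `` {(l0, b x)}"
  shows "\<exists>l \<in> I. leq l0 l \<and> (\<forall>x \<in> X. psi l l0 (a x) = psi l l0 (b x))"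
proof -
  define Q where "Q x n \<longleftrightarrow> leq l0 n \<and> psi n l0 (a x) = psi n l0 (b x)" for x n
  have "\<exists>n \<in> I. Q x n" if "x \<in> X" for x
  proof -
    have "((l0, a x), (l0, b x)) \<in> lim_rel"
      using ab[OF that] class_eq_iff[OF assms(2) _ assms(2)] by blast
    then show ?thesis unfolding Q_def using lim_rel_above[OF _ assms(2)] by fastforce
  qed
  moreover have "Q x n" if "x \<in> X" "m \<in> I" "n \<in> I" "Q x m" "leq m n" for x m n
    using that ab[OF that(1)] assms(2) psi_eq_upward[of l0 l0 m n "a x" "b x"] leq_trans[of l0 m n]
    unfolding Q_def by blast
  ultimately obtain l where "l \<in> I" "leq l0 l" "\<forall>x \<in> X. Q x l"
    using directed_set_eventually_all[OF directed assms(1,2), of Q] by blast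
  then show ?thesis unfolding Q_def by blast
qed

lemma representatives_mult_at_common_level:
  assumes "finite T" "l0 \<in> I"
    and u: "\<And>A. A \<in> T \<Longrightarrow> u A \<in> carrier (Ms l0) \<and> lim_rel `` {(l0, u A)} = A"
    and u_mult: "\<And>A B. A \<in> T \<Longrightarrow> B \<in> T \<Longrightarrow>
      u (A \<otimes>\<^bsub>Lim\<^esub> B) \<in> carrier (Ms l0) \<and> lim_rel `` {(l0, u (A \<otimes>\<^bsub>Lim\<^esub> B))} = A \<otimes>\<^bsub>Lim\<^esub> B"
  shows "\<exists>l \<in> I. leq l0 l \<and>
    (\<forall>A \<in> T. \<forall>B \<in> T. psi l l0 (u A \<otimes>\<^bsub>Ms l0\<^esub> u B) = psi l l0 (u (A \<otimes>\<^bsub>Lim\<^esub> B)))"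
proof -
  have "\<exists>l \<in> I. leq l0 l \<and> (\<forall>x \<in> T \<times> T.
      psi l l0 (u (fst x) \<otimes>\<^bsub>Ms l0\<^esub> u (snd x)) = psi l l0 (u (fst x \<otimes>\<^bsub>Lim\<^esub> snd x)))"
  proof (rule classes_eq_at_common_level)
    fix x assume "x \<in> T \<times> T"
    then obtain A B where x: "x = (A, B)" and AB: "A \<in> T" "B \<in> T" by blast
    have "lim_rel `` {(l0, u A \<otimes>\<^bsub>Ms l0\<^esub> u B)} = A \<otimes>\<^bsub>Lim\<^esub> B"
      using mult_class[OF \<open>l0 \<in> I\<close>, of "u A" "u B"] u[OF AB(1)] u[OF AB(2)] by simp
    then show "u (fst x) \<otimes>\<^bsub>Ms l0\<^esub> u (snd x) \<in> carrier (Ms l0) \<and>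
        u (fst x \<otimes>\<^bsub>Lim\<^esub> snd x) \<in> carrier (Ms l0) \<and>
        lim_rel `` {(l0, u (fst x) \<otimes>\<^bsub>Ms l0\<^esub> u (snd x))} = lim_rel `` {(l0, u (fst x \<otimes>\<^bsub>Lim\<^esub> snd x))}"
      using x u AB u_mult monoid.m_closed[OF monoid[OF \<open>l0 \<in> I\<close>]] by simp
  qed (use assms(1,2) in simp_all)
  then show ?thesis by fastforce
qed

lemma dlim_multiplicative_representatives:
  assumes "finite T" "T \<subseteq> carrier Lim"
  shows "\<exists>l \<in> I. \<exists>g \<in> carrier Lim \<rightarrow> carrier (Ms l). (\<forall>A \<in> T. lim_rel `` {(l, g A)} = A) \<and>
           g \<one>\<^bsub>Lim\<^esub> = \<one>\<^bsub>Ms l\<^esub> \<and> (\<forall>A \<in> T. \<forall>B \<in> T. g (A \<otimes>\<^bsub>Lim\<^esub> B) = g A \<otimes>\<^bsub>Ms l\<^esub> g B)"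
proof -
  interpret Lim: monoid Lim by (rule monoid_dlim)
  define T' where "T' = T \<union> (\<lambda>(A, B). A \<otimes>\<^bsub>Lim\<^esub> B) ` (T \<times> T)"
  have T': "\<And>A. A \<in> T \<Longrightarrow> A \<in> T'" "\<And>A B. A \<in> T \<Longrightarrow> B \<in> T \<Longrightarrow> A \<otimes>\<^bsub>Lim\<^esub> B \<in> T'"
    unfolding T'_def by auto
  have "finite T'" "T' \<subseteq> carrier Lim" unfolding T'_def using assms by auto
  then obtain l0 u0 where l0: "l0 \<in> I"
    and u0: "\<forall>A \<in> T'. u0 A \<in> carrier (Ms l0) \<and> lim_rel `` {(l0, u0 A)} = A"
    using dlim_common_level by blast
  define u where "u A = (if A = \<one>\<^bsub>Lim\<^esub> then \<one>\<^bsub>Ms l0\<^esub> else u0 A)" for A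
  have u: "\<And>A. A \<in> T' \<Longrightarrow> u A \<in> carrier (Ms l0) \<and> lim_rel `` {(l0, u A)} = A"
    using u0 one_dlim[OF l0] monoid.one_closed[OF monoid[OF l0]] unfolding u_def by auto
  obtain l where l: "l \<in> I" "leq l0 l"
    and eq: "\<forall>A \<in> T. \<forall>B \<in> T. psi l l0 (u A \<otimes>\<^bsub>Ms l0\<^esub> u B) = psi l l0 (u (A \<otimes>\<^bsub>Lim\<^esub> B))"
    using representatives_mult_at_common_level[OF assms(1) l0, of u] u T' by blast
  define g where "g A = (if A \<in> T' then psi l l0 (u A) else \<one>\<^bsub>Ms l\<^esub>)" for A
  have "g \<in> carrier Lim \<rightarrow> carrier (Ms l)"
    unfolding g_def using u psi_closed[OF l0 l] monoid.one_closed[OF monoid[OF l(1)]] by auto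
  moreover have "\<forall>A \<in> T. lim_rel `` {(l, g A)} = A"
  proof
    fix A assume "A \<in> T"
    then have A: "A \<in> T'" by (rule T'(1))
    then have "lim_rel `` {(l, g A)} = lim_rel `` {(l0, u A)}"
      unfolding g_def using class_lift[OF l0 l(1) l(2)] u by simp
    with u[OF A] show "lim_rel `` {(l, g A)} = A" by simp
  qed
  moreover have "g \<one>\<^bsub>Lim\<^esub> = \<one>\<^bsub>Ms l\<^esub>"
    unfolding g_def u_def using psi_one[OF l0 l] by simp
  moreover have "\<forall>A \<in> T. \<forall>B \<in> T. g (A \<otimes>\<^bsub>Lim\<^esub> B) = g A \<otimes>\<^bsub>Ms l\<^esub> g B"
  proof (intro ballI)
    fix A B assume AB: "A \<in> T" "B \<in> T"
    then have "g (A \<otimes>\<^bsub>Lim\<^esub> B) = psi l l0 (u A \<otimes>\<^bsub>Ms l0\<^esub> u B)"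
      using eq T' unfolding g_def by auto
    also have "\<dots> = g A \<otimes>\<^bsub>Ms l\<^esub> g B"
      using psi_mult[OF l0 l] u T'(1) AB unfolding g_def by simp
    finally show "g (A \<otimes>\<^bsub>Lim\<^esub> B) = g A \<otimes>\<^bsub>Ms l\<^esub> g B" .
  qed
  ultimately show ?thesis using l(1) by blast
qed

lemma strongly_sofic_dlim:
  assumes "\<forall>i \<in> I. strongly_sofic (Ms i)"
  shows "strongly_sofic Lim"
proof (rule strongly_sofic_if_locally_embeddable)
  fix K assume "finite K" "K \<subseteq> carrier Lim"
  then obtain l g where "l \<in> I" "g \<in> carrier Lim \<rightarrow> carrier (Ms l)" "\<forall>A \<in> K. lim_rel `` {(l, g A)} = A"
    "g \<one>\<^bsub>Lim\<^esub> = \<one>\<^bsub>Ms l\<^esub>" "\<forall>A \<in> K. \<forall>B \<in> K. g (A \<otimes>\<^bsub>Lim\<^esub> B) = g A \<otimes>\<^bsub>Ms l\<^esub> g B"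
    by (blast dest: dlim_multiplicative_representatives)
  moreover from this(3) have "inj_on g K" by (metis inj_onI)
  ultimately show "\<exists>(N :: 'a monoid) f. strongly_sofic N \<and> f \<in> carrier Lim \<rightarrow> carrier N \<and> inj_on f K \<and>
      f \<one>\<^bsub>Lim\<^esub> = \<one>\<^bsub>N\<^esub> \<and> (\<forall>A \<in> K. \<forall>B \<in> K. f (A \<otimes>\<^bsub>Lim\<^esub> B) = f A \<otimes>\<^bsub>N\<^esub> f B)"
    using assms by (intro exI[of _ "Ms l"] exI[of _ g]) simp
qed

end

theorem proposition3p11:
  fixes I :: "'i set" and leq :: "'i \<Rightarrow> 'i \<Rightarrow> bool"
    and Ms :: "'i \<Rightarrow> 'a monoid" and psi :: "'i \<Rightarrow> 'i \<Rightarrow> 'a \<Rightarrow> 'a"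
    and M :: "'b monoid"
  assumes "inductive_system I leq Ms psi"
    and "\<forall>i \<in> I. strongly_sofic (Ms i)"
    and "monoid M"
    and "M \<cong> dlim I leq Ms psi"
  shows "strongly_sofic M"
proof -
  interpret monoid_inductive_system I leq Ms psi by (rule monoid_inductive_system.intro) fact
  obtain h where "h \<in> iso M Lim" using assms(4) unfolding is_iso_def by blast
  then show ?thesis
    by (rule strongly_sofic_iso[OF strongly_sofic_dlim[OF assms(2)] _ assms(3) monoid_dlim])
qed

end
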